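(* Let $G$ be a countable discrete group acting by a topological partial action $\theta=\{\theta_g\colon Y_{g^{-1}}\to Y_g\}_{g\in G}$ on a compact space $Y$, and let $X$ be a nonempty compact space, with $\hat\theta$ the induced partial action on $C(X,Y)$. Then the following are equivalent: (i) $Y_g$ is clopen for all $g\in G$; (ii) the enveloping space $Y_G$ is Hausdorff; (iii) the enveloping space $C(X,Y)_G$ is Hausdorff.
   Context: A topological partial action of $G$ on $Y$ is a family of homeomorphisms $\theta_g\colon Y_{g^{-1}}\to Y_g$ between open subsets with $Y_e=Y$, $\theta_e=\mathrm{id}_Y$, $\theta_{g^{-1}}=\theta_g^{-1}$, $\theta_g\circ\theta_h$ a restriction of $\theta_{gh}$. $C(X,Y)$ has the compact-open topology; $\hat\theta$ has $C(X,Y)_g=\{f: f(X)\subset Y_g\}$ and $\hat\theta_g(f)=\theta_g\circ f$. For a topological partial action on $W$, the enveloping space is $W_G=(G\times W)/R$ with the quotient topology, where $(g,x)R(h,y)$ iff $x\in W_{g^{-1}h}$ and $\theta_{h^{-1}g}(x)=y$. *)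

theory Defs
  imports "HOL-Analysis.Analysis" "HOL-Algebra.Group"
begin

definition top_partial_action ::
  "('g, 'm) monoid_scheme \<Rightarrow> 'a topology \<Rightarrow> ('g \<Rightarrow> 'a set) \<Rightarrow> ('g \<Rightarrow> 'a \<Rightarrow> 'a) \<Rightarrow> bool" where
  "top_partial_action G W D th \<longleftrightarrow>
     (\<forall>g\<in>carrier G. openin W (D g)) \<and>
     D \<one>\<^bsub>G\<^esub> = topspace W \<and>
     (\<forall>x\<in>topspace W. th \<one>\<^bsub>G\<^esub> x = x) \<and>
     (\<forall>g\<in>carrier G. homeomorphic_map (subtopology W (D (inv\<^bsub>G\<^esub> g))) (subtopology W (D g)) (th g)) \<and>
     (\<forall>g\<in>carrier G. \<forall>x\<in>D (inv\<^bsub>G\<^esub> g). th (inv\<^bsub>G\<^esub> g) (th g x) = x) \<and>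
     (\<forall>g\<in>carrier G. \<forall>h\<in>carrier G. \<forall>x\<in>D (inv\<^bsub>G\<^esub> h).
        th h x \<in> D (inv\<^bsub>G\<^esub> g) \<longrightarrow>
          x \<in> D (inv\<^bsub>G\<^esub> (g \<otimes>\<^bsub>G\<^esub> h)) \<and> th (g \<otimes>\<^bsub>G\<^esub> h) x = th g (th h x))"

definition quotient_topology :: "'a topology \<Rightarrow> ('a \<times> 'a) set \<Rightarrow> 'a set topology" where
  "quotient_topology X R =
     topology_generated_by {U. U \<subseteq> topspace X // R \<and> openin X (\<Union>U)}"

definition envel_rel ::
  "('g, 'm) monoid_scheme \<Rightarrow> 'a topology \<Rightarrow> ('g \<Rightarrow> 'a set) \<Rightarrow> ('g \<Rightarrow> 'a \<Rightarrow> 'a) \<Rightarrow> (('g \<times> 'a) \<times> ('g \<times> 'a)) set" where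
  "envel_rel G W D th =
     {((g, x), (h, y)). g \<in> carrier G \<and> h \<in> carrier G \<and> x \<in> topspace W \<and> y \<in> topspace W \<and>
        x \<in> D (inv\<^bsub>G\<^esub> g \<otimes>\<^bsub>G\<^esub> h) \<and> th (inv\<^bsub>G\<^esub> h \<otimes>\<^bsub>G\<^esub> g) x = y}"

definition enveloping_space ::
  "('g, 'm) monoid_scheme \<Rightarrow> 'a topology \<Rightarrow> ('g \<Rightarrow> 'a set) \<Rightarrow> ('g \<Rightarrow> 'a \<Rightarrow> 'a) \<Rightarrow> ('g \<times> 'a) set topology" where
  "enveloping_space G W D th =
     quotient_topology (prod_topology (discrete_topology (carrier G)) W) (envel_rel G W D th)"

text \<open>C(X,Y): continuous maps, made extensional (undefined outside topspace X).\<close>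
definition cmaps :: "'a topology \<Rightarrow> 'b topology \<Rightarrow> ('a \<Rightarrow> 'b) set" where
  "cmaps X Y = {f. f \<in> topspace X \<rightarrow>\<^sub>E topspace Y \<and> continuous_map X Y f}"

definition compact_open :: "'a topology \<Rightarrow> 'b topology \<Rightarrow> ('a \<Rightarrow> 'b) topology" where
  "compact_open X Y = topology_generated_by
     {{f \<in> cmaps X Y. f ` K \<subseteq> U} | K U. compactin X K \<and> openin Y U}"

definition hat_dom :: "'a topology \<Rightarrow> 'b topology \<Rightarrow> ('g \<Rightarrow> 'b set) \<Rightarrow> 'g \<Rightarrow> ('a \<Rightarrow> 'b) set" where
  "hat_dom X Y D g = {f \<in> cmaps X Y. f ` topspace X \<subseteq> D g}"

definition hat_act :: "'a topology \<Rightarrow> ('g \<Rightarrow> 'b \<Rightarrow> 'b) \<Rightarrow> 'g \<Rightarrow> ('a \<Rightarrow> 'b) \<Rightarrow> ('a \<Rightarrow> 'b)" where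
  "hat_act X th g f = (\<lambda>x\<in>topspace X. th g (f x))"

end

theory Submission
  imports Defs
begin

text \<open>The enveloping space \<open>W\<^sub>G\<close> is the quotient of \<open>G \<times> W\<close> by an equivalence relation \<open>R\<close>
  whose saturations of open sets are open, because the maps \<open>\<theta>\<^sub>g\<close> are homeomorphisms between
  open sets. For such a quotient, being Hausdorff is equivalent to \<open>R\<close> being closed in
  \<open>(G \<times> W)\<^sup>2\<close>. Over a pair \<open>(g, h)\<close>, \<open>R\<close> is the graph of \<open>\<theta>_{h^-1 g}\<close> on
  \<open>W_{g^-1 h}\<close>, which is closed when the domains are closed and \<open>W\<close> is Hausdorff.
  Conversely, if \<open>R\<close> is closed, the domain \<open>Y\<^sub>h\<close> is the projection of a closed subset of
  \<open>Y \<times> Y\<close>, hence closed because \<open>Y\<close> is compact. For \<open>C(X, Y)\<close> the domain \<open>{f. f(X) \<subseteq> Y\<^sub>g}\<close> is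
  closed whenever \<open>Y\<^sub>g\<close> is, and \<open>Y\<close> embeds into \<open>C(X, Y)\<close> as the constant maps, which
  carries the converse over from \<open>Y\<close>.\<close>

section \<open>Quotient topologies\<close>

lemma openin_quotient_topology:
  assumes "equiv (topspace P) R"
  shows "openin (quotient_topology P R) V \<longleftrightarrow> V \<subseteq> topspace P // R \<and> openin P (\<Union>V)"
proof
  assume "openin (quotient_topology P R) V"
  then have "generate_topology_on {U. U \<subseteq> topspace P // R \<and> openin P (\<Union>U)} V"
    unfolding quotient_topology_def by (rule openin_topology_generated_by)
  then show "V \<subseteq> topspace P // R \<and> openin P (\<Union>V)"
  proof induct
    case (Int A B)
    have "\<Union>(A \<inter> B) = \<Union>A \<inter> \<Union>B"
    proof
      show "\<Union>A \<inter> \<Union>B \<subseteq> \<Union>(A \<inter> B)"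
      proof
        fix x assume "x \<in> \<Union>A \<inter> \<Union>B"
        then obtain a b where "a \<in> A" "b \<in> B" "x \<in> a" "x \<in> b" by auto
        moreover have "a = b \<or> a \<inter> b = {}"
          using quotient_disj[OF assms] Int \<open>a \<in> A\<close> \<open>b \<in> B\<close> by blast
        ultimately show "x \<in> \<Union>(A \<inter> B)" by auto
      qed
    qed auto
    then show ?case using Int by auto
  next
    case (UN K)
    have "openin P (\<Union>(Union ` K))"
      using UN by (intro openin_Union) auto
    moreover have "\<Union>(\<Union>K) = \<Union>(Union ` K)" by auto
    moreover have "\<Union>K \<subseteq> topspace P // R"
      using UN by blast
    ultimately show ?case by simp
  qed auto
next
  assume "V \<subseteq> topspace P // R \<and> openin P (\<Union>V)"
  then show "openin (quotient_topology P R) V"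
    unfolding quotient_topology_def by (intro topology_generated_by_Basis) auto
qed

lemma topspace_quotient_topology:
  assumes "equiv (topspace P) R"
  shows "topspace (quotient_topology P R) = topspace P // R"
proof -
  have "topspace P // R \<in> {U. U \<subseteq> topspace P // R \<and> openin P (\<Union>U)}"
    using Union_quotient[OF assms] by auto
  then show ?thesis
    unfolding quotient_topology_def topology_generated_by_topspace by auto
qed

lemma equiv_class_in_iff_mem_Union:
  assumes "equiv A R" "V \<subseteq> A // R" "p \<in> A"
  shows "R``{p} \<in> V \<longleftrightarrow> p \<in> \<Union>V"
proof
  assume "R``{p} \<in> V"
  then show "p \<in> \<Union>V"
    using assms(1,3) by (metis UnionI equiv_class_self)
next
  assume "p \<in> \<Union>V"
  then obtain q where "q \<in> A" "R``{q} \<in> V" "p \<in> R``{q}"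
    using assms(2) by (auto elim!: quotientE)
  then show "R``{p} \<in> V"
    using equiv_class_eq[OF assms(1)] by auto
qed

lemma continuous_map_quotient_topology:
  assumes "equiv (topspace P) R"
  shows "continuous_map P (quotient_topology P R) (\<lambda>p. R``{p})"
  unfolding continuous_map_def
proof (intro conjI allI impI)
  show "(\<lambda>p. R``{p}) \<in> topspace P \<rightarrow> topspace (quotient_topology P R)"
    by (auto simp: topspace_quotient_topology[OF assms] intro: quotientI)
next
  fix V assume "openin (quotient_topology P R) V"
  then have V: "V \<subseteq> topspace P // R" "openin P (\<Union>V)"
    using openin_quotient_topology[OF assms] by auto
  have "{p \<in> topspace P. R``{p} \<in> V} = \<Union>V"
    using equiv_class_in_iff_mem_Union[OF assms V(1)] in_quotient_imp_subset[OF assms] V(1)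
    by blast
  then show "openin P {p \<in> topspace P. R``{p} \<in> V}"
    using V(2) by simp
qed

lemma closedin_equiv_if_Hausdorff_quotient:
  assumes equiv: "equiv (topspace P) R"
    and "Hausdorff_space (quotient_topology P R)"
  shows "closedin (prod_topology P P) R"
proof -
  let ?Q = "quotient_topology P R"
  let ?classes = "\<lambda>(u, v). (R``{u}, R``{v})"
  have "continuous_map (prod_topology P P) (prod_topology ?Q ?Q) ?classes"
    using continuous_map_quotient_topology[OF equiv] by (simp add: continuous_map_prod_top)
  moreover have "closedin (prod_topology ?Q ?Q) ((\<lambda>x. (x, x)) ` topspace ?Q)"
    using assms(2) Hausdorff_space_closedin_diagonal by blast
  ultimately have "closedin (prod_topology P P)
      {z \<in> topspace (prod_topology P P). ?classes z \<in> (\<lambda>x. (x, x)) ` topspace ?Q}"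
    by (rule closedin_continuous_map_preimage)
  moreover have "R = {z \<in> topspace (prod_topology P P). ?classes z \<in> (\<lambda>x. (x, x)) ` topspace ?Q}"
  proof (intro subset_antisym subsetI)
    fix z assume "z \<in> R"
    moreover obtain a b where z: "z = (a, b)" by (cases z)
    ultimately have "a \<in> topspace P" "b \<in> topspace P" "R``{a} = R``{b}"
      using equiv_type[OF equiv] equiv_class_eq[OF equiv] by auto
    then show "z \<in> {z \<in> topspace (prod_topology P P). ?classes z \<in> (\<lambda>x. (x, x)) ` topspace ?Q}"
      using z by (auto simp: topspace_quotient_topology[OF equiv] intro: quotientI)
  next
    fix z assume "z \<in> {z \<in> topspace (prod_topology P P). ?classes z \<in> (\<lambda>x. (x, x)) ` topspace ?Q}"
    then show "z \<in> R"
      using eq_equiv_class_iff[OF equiv] by auto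
  qed
  ultimately show ?thesis by simp
qed

lemma Hausdorff_quotient_if_closedin_equiv:
  assumes equiv: "equiv (topspace P) R"
    and saturation_open: "\<And>U. openin P U \<Longrightarrow> openin P (R``U)"
    and closed: "closedin (prod_topology P P) R"
  shows "Hausdorff_space (quotient_topology P R)"
  unfolding Hausdorff_space_def
proof (intro allI impI, elim conjE)
  let ?Q = "quotient_topology P R"
  have image_open: "openin ?Q ((\<lambda>p. R``{p}) ` U)" if U: "openin P U" for U
  proof -
    have "(\<lambda>p. R``{p}) ` U \<subseteq> topspace P // R"
      using openin_subset[OF U] by (auto intro: quotientI)
    moreover have "\<Union>((\<lambda>p. R``{p}) ` U) = R``U" by auto
    ultimately show ?thesis
      using saturation_open[OF U] openin_quotient_topology[OF equiv] by simp
  qed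
  fix p q assume "p \<in> topspace ?Q" "q \<in> topspace ?Q" "p \<noteq> q"
  then obtain u v where uv: "u \<in> topspace P" "v \<in> topspace P" "p = R``{u}" "q = R``{v}"
    by (auto simp: topspace_quotient_topology[OF equiv] elim!: quotientE)
  with \<open>p \<noteq> q\<close> have "(u, v) \<notin> R"
    using equiv_class_eq[OF equiv] by blast
  then have "(u, v) \<in> topspace (prod_topology P P) - R"
    using uv by simp
  moreover have "openin (prod_topology P P) (topspace (prod_topology P P) - R)"
    using closed by (simp add: closedin_def)
  ultimately obtain U V where UV: "openin P U" "openin P V" "u \<in> U" "v \<in> V"
    "U \<times> V \<subseteq> topspace (prod_topology P P) - R"
    by (metis openin_prod_topology_alt)
  have "R``{a} \<noteq> R``{b}" if "a \<in> U" "b \<in> V" for a b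
  proof
    assume "R``{a} = R``{b}"
    moreover have "a \<in> topspace P" "b \<in> topspace P"
      using that UV(1,2) openin_subset by blast+
    ultimately have "(a, b) \<in> R"
      using eq_equiv_class_iff[OF equiv] by blast
    then show False
      using that UV(5) by blast
  qed
  then have "disjnt ((\<lambda>p. R``{p}) ` U) ((\<lambda>p. R``{p}) ` V)"
    by (auto simp: disjnt_def)
  then show "\<exists>U V. openin ?Q U \<and> openin ?Q V \<and> p \<in> U \<and> q \<in> V \<and> disjnt U V"
    using UV uv image_open by blast
qed

section \<open>Products with a discrete factor\<close>

lemma openin_prod_discrete_topology_iff:
  assumes "E \<subseteq> I \<times> topspace W"
  shows "openin (prod_topology (discrete_topology I) W) E \<longleftrightarrow>
    (\<forall>i\<in>I. openin W {x. (i, x) \<in> E})"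
proof
  assume E: "openin (prod_topology (discrete_topology I) W) E"
  show "\<forall>i\<in>I. openin W {x. (i, x) \<in> E}"
  proof
    fix i assume "i \<in> I"
    then have "continuous_map W (prod_topology (discrete_topology I) W) (\<lambda>x. (i, x))"
      by (simp add: continuous_map_pairedI)
    moreover have "{x \<in> topspace W. (i, x) \<in> E} = {x. (i, x) \<in> E}"
      using assms by auto
    ultimately show "openin W {x. (i, x) \<in> E}"
      using openin_continuous_map_preimage[OF _ E] by fastforce
  qed
next
  assume slices: "\<forall>i\<in>I. openin W {x. (i, x) \<in> E}"
  have "E = (\<Union>i\<in>I. {i} \<times> {x. (i, x) \<in> E})"
    using assms by auto
  moreover have "openin (prod_topology (discrete_topology I) W) (\<Union>i\<in>I. {i} \<times> {x. (i, x) \<in> E})"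
    using slices by (intro openin_Union) (auto simp: openin_prod_Times_iff)
  ultimately show "openin (prod_topology (discrete_topology I) W) E"
    by simp
qed

lemma closedin_prod_discrete_topology_square:
  fixes I :: "'i set" and W :: "'a topology" and S :: "(('i \<times> 'a) \<times> ('i \<times> 'a)) set"
  defines "P \<equiv> prod_topology (discrete_topology I) W"
  assumes "S \<subseteq> topspace (prod_topology P P)"
    and "\<And>i j. i \<in> I \<Longrightarrow> j \<in> I \<Longrightarrow> closedin (prod_topology W W) {(x, y). ((i, x), (j, y)) \<in> S}"
  shows "closedin (prod_topology P P) S"
  unfolding closedin_def openin_prod_topology_alt
proof (intro conjI assms(2) allI impI)
  fix p q assume pq: "(p, q) \<in> topspace (prod_topology P P) - S"
  obtain i x j y where ij: "p = (i, x)" "q = (j, y)"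
    by (cases p, cases q)
  define C where "C = topspace (prod_topology W W) - {(x, y). ((i, x), (j, y)) \<in> S}"
  have ij_in: "i \<in> I" "j \<in> I" and "(x, y) \<in> C"
    using pq ij by (auto simp: P_def C_def)
  moreover have "openin (prod_topology W W) C"
    using assms(3)[OF ij_in] by (simp add: C_def closedin_def)
  ultimately obtain U V where UV: "openin W U" "openin W V" "x \<in> U" "y \<in> V" "U \<times> V \<subseteq> C"
    by (metis openin_prod_topology_alt)
  show "\<exists>U V. openin P U \<and> openin P V \<and> p \<in> U \<and> q \<in> V \<and> U \<times> V \<subseteq> topspace (prod_topology P P) - S"
  proof (intro exI conjI)
    show "openin P ({i} \<times> U)" "openin P ({j} \<times> V)"
      using UV ij_in by (simp_all add: P_def openin_prod_Times_iff)
    show "({i} \<times> U) \<times> ({j} \<times> V) \<subseteq> topspace (prod_topology P P) - S"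
      using UV ij_in by (fastforce simp: P_def C_def)
  qed (use ij UV in auto)
qed

lemma closedin_graph_on_closedin:
  assumes "closedin X S" "continuous_map (subtopology X S) Y f" "Hausdorff_space Y"
  shows "closedin (prod_topology X Y) ((\<lambda>x. (x, f x)) ` S)"
proof -
  have "closedin (prod_topology (subtopology X S) Y) ((\<lambda>x. (x, f x)) ` topspace (subtopology X S))"
    by (rule continuous_map_imp_closed_graph[OF assms(2,3)])
  moreover have "topspace (subtopology X S) = S"
    using closedin_subset[OF assms(1)] by auto
  moreover have "closedin (prod_topology X Y) (S \<times> topspace Y)"
    using assms(1) by (simp add: closedin_prod_Times_iff)
  ultimately show ?thesis
    by (metis closedin_trans_full prod_topology_subtopology(1))
qed

lemma openin_preimage_on_openin:
  assumes "continuous_map (subtopology X S) Y f" "openin X S" "openin Y U"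
  shows "openin X {x \<in> S. f x \<in> U}"
proof -
  have "openin (subtopology X S) {x \<in> topspace (subtopology X S). f x \<in> U}"
    by (rule openin_continuous_map_preimage[OF assms(1,3)])
  moreover have eq: "{x \<in> topspace (subtopology X S). f x \<in> U} = {x \<in> S. f x \<in> U}"
    using openin_subset[OF assms(2)] by auto
  ultimately have "openin (subtopology X S) {x \<in> S. f x \<in> U}"
    by (simp only: eq)
  then show ?thesis
    by (simp add: openin_open_subtopology[OF assms(2)])
qed

section \<open>Topological partial actions and their enveloping spaces\<close>

lemma top_partial_action_openin:
  assumes "top_partial_action G W D th" "g \<in> carrier G"
  shows "openin W (D g)"
  using assms unfolding top_partial_action_def by simp

lemma top_partial_action_subset_topspace:
  assumes "top_partial_action G W D th" "g \<in> carrier G"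
  shows "D g \<subseteq> topspace W"
  using openin_subset[OF top_partial_action_openin[OF assms]] .

context group
begin

lemma top_partial_action_continuous:
  assumes "top_partial_action G W D th" "g \<in> carrier G"
  shows "continuous_map (subtopology W (D (inv g))) W (th g)"
proof -
  have "homeomorphic_map (subtopology W (D (inv g))) (subtopology W (D g)) (th g)"
    using assms unfolding top_partial_action_def by simp
  then show ?thesis
    using homeomorphic_imp_continuous_map continuous_map_in_subtopology by blast
qed

lemma top_partial_action_in_domain:
  assumes "top_partial_action G W D th" "g \<in> carrier G" "x \<in> D (inv g)"
  shows "th g x \<in> D g"
proof -
  have "homeomorphic_map (subtopology W (D (inv g))) (subtopology W (D g)) (th g)"
    using assms unfolding top_partial_action_def by simp
  moreover have "x \<in> topspace (subtopology W (D (inv g)))"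
    using assms top_partial_action_subset_topspace[of G W D th "inv g"] by auto
  ultimately have "th g x \<in> topspace (subtopology W (D g))"
    using homeomorphic_imp_surjective_map by blast
  then show ?thesis
    by simp
qed

lemma top_partial_action_in_topspace:
  assumes "top_partial_action G W D th" "g \<in> carrier G" "x \<in> D (inv g)"
  shows "th g x \<in> topspace W"
  using top_partial_action_in_domain[OF assms] top_partial_action_subset_topspace[OF assms(1,2)]
  by blast

lemma top_partial_action_one:
  assumes "top_partial_action G W D th"
  shows "D \<one> = topspace W" and "x \<in> topspace W \<Longrightarrow> th \<one> x = x"
  using assms unfolding top_partial_action_def by simp_all

lemma top_partial_action_inv_cancel:
  assumes "top_partial_action G W D th" "g \<in> carrier G" "x \<in> D (inv g)"
  shows "th (inv g) (th g x) = x"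
  using assms unfolding top_partial_action_def by simp

lemma top_partial_action_mult:
  assumes "top_partial_action G W D th" "g \<in> carrier G" "h \<in> carrier G" "x \<in> D (inv h)"
    "th h x \<in> D (inv g)"
  shows "x \<in> D (inv (g \<otimes> h)) \<and> th (g \<otimes> h) x = th g (th h x)"
  using assms unfolding top_partial_action_def by simp

lemma equiv_envel_rel:
  assumes tpa: "top_partial_action G W D th"
  shows "equiv (carrier G \<times> topspace W) (envel_rel G W D th)"
proof (rule equivI)
  show "envel_rel G W D th \<subseteq> (carrier G \<times> topspace W) \<times> (carrier G \<times> topspace W)"
    by (auto simp: envel_rel_def)
next
  show "refl_on (carrier G \<times> topspace W) (envel_rel G W D th)"
  proof (rule refl_onI, clarify)
    fix g x assume "g \<in> carrier G" "x \<in> topspace W"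
    then show "((g, x), (g, x)) \<in> envel_rel G W D th"
      using top_partial_action_one[OF tpa] by (simp add: envel_rel_def)
  qed
next
  show "sym (envel_rel G W D th)"
  proof (rule symI)
    fix a b assume ab: "(a, b) \<in> envel_rel G W D th"
    obtain g x h y where ab_pairs: "a = (g, x)" "b = (h, y)"
      by (cases a, cases b)
    from ab ab_pairs have gh: "g \<in> carrier G" "h \<in> carrier G" and "x \<in> topspace W" "y \<in> topspace W"
      and x: "x \<in> D (inv (inv h \<otimes> g))" and y: "th (inv h \<otimes> g) x = y"
      by (auto simp: envel_rel_def inv_mult_group)
    moreover have "y \<in> D (inv h \<otimes> g)"
      using top_partial_action_in_domain[OF tpa _ x] gh y by simp
    moreover have "th (inv g \<otimes> h) y = x"
      using top_partial_action_inv_cancel[OF tpa _ x] gh y by (simp add: inv_mult_group)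
    ultimately show "(b, a) \<in> envel_rel G W D th"
      using ab_pairs by (simp add: envel_rel_def)
  qed
next
  show "trans (envel_rel G W D th)"
  proof (rule transI)
    fix a b c assume ab: "(a, b) \<in> envel_rel G W D th" and bc: "(b, c) \<in> envel_rel G W D th"
    obtain g x h y l z where abc: "a = (g, x)" "b = (h, y)" "c = (l, z)"
      by (cases a, cases b, cases c)
    from ab bc abc have g: "g \<in> carrier G" and h: "h \<in> carrier G" and l: "l \<in> carrier G"
      and "x \<in> topspace W" "z \<in> topspace W"
      and x: "x \<in> D (inv (inv h \<otimes> g))" and y: "th (inv h \<otimes> g) x = y"
      and y': "y \<in> D (inv (inv l \<otimes> h))" and z: "th (inv l \<otimes> h) y = z"
      by (auto simp: envel_rel_def inv_mult_group)
    have "(inv l \<otimes> h) \<otimes> (inv h \<otimes> g) = inv l \<otimes> g"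
      using g h l by (simp add: m_assoc[symmetric]) (simp add: m_assoc r_inv)
    moreover have "x \<in> D (inv ((inv l \<otimes> h) \<otimes> (inv h \<otimes> g)))
        \<and> th ((inv l \<otimes> h) \<otimes> (inv h \<otimes> g)) x = th (inv l \<otimes> h) (th (inv h \<otimes> g) x)"
      by (rule top_partial_action_mult[OF tpa _ _ x]) (use g h l y y' in simp_all)
    ultimately have "x \<in> D (inv (inv l \<otimes> g)) \<and> th (inv l \<otimes> g) x = z"
      using y z by simp
    then show "(a, c) \<in> envel_rel G W D th"
      using g l \<open>x \<in> topspace W\<close> \<open>z \<in> topspace W\<close> abc
      by (simp add: envel_rel_def inv_mult_group)
  qed
qed

lemma openin_envel_rel_Image:
  assumes tpa: "top_partial_action G W D th"
    and E: "openin (prod_topology (discrete_topology (carrier G)) W) E"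
  shows "openin (prod_topology (discrete_topology (carrier G)) W) (envel_rel G W D th `` E)"
proof -
  let ?R = "envel_rel G W D th"
  have sym: "(q, p) \<in> ?R" if "(p, q) \<in> ?R" for p q
    using equiv_envel_rel[OF tpa] that by (meson equiv_def symD)
  have E_sub: "E \<subseteq> carrier G \<times> topspace W"
    using openin_subset[OF E] by simp
  have E_slice: "openin W {a. (g, a) \<in> E}" if "g \<in> carrier G" for g
    using E that openin_prod_discrete_topology_iff[OF E_sub] by blast
  have slice: "{b. (l, b) \<in> ?R `` E} =
      (\<Union>g\<in>carrier G. {b \<in> D (inv (inv g \<otimes> l)). th (inv g \<otimes> l) b \<in> {a. (g, a) \<in> E}})"
    if l: "l \<in> carrier G" for l
  proof (intro subset_antisym subsetI)
    fix b assume "b \<in> {b. (l, b) \<in> ?R `` E}"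
    then obtain p where "p \<in> E" "(p, (l, b)) \<in> ?R"
      by blast
    moreover obtain g a where "p = (g, a)"
      by (cases p)
    ultimately have "(g, a) \<in> E" "((l, b), (g, a)) \<in> ?R"
      using sym by auto
    then show "b \<in> (\<Union>g\<in>carrier G. {b \<in> D (inv (inv g \<otimes> l)). th (inv g \<otimes> l) b \<in> {a. (g, a) \<in> E}})"
      using l by (auto simp: envel_rel_def inv_mult_group)
  next
    fix b assume "b \<in> (\<Union>g\<in>carrier G. {b \<in> D (inv (inv g \<otimes> l)). th (inv g \<otimes> l) b \<in> {a. (g, a) \<in> E}})"
    then obtain g where g: "g \<in> carrier G" and b: "b \<in> D (inv (inv g \<otimes> l))"
      and gE: "(g, th (inv g \<otimes> l) b) \<in> E"
      by blast
    have "b \<in> topspace W"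
      using b g l top_partial_action_subset_topspace[OF tpa, of "inv (inv g \<otimes> l)"] by auto
    then have "((l, b), (g, th (inv g \<otimes> l) b)) \<in> ?R"
      using b g l gE E_sub by (auto simp: envel_rel_def inv_mult_group)
    then show "b \<in> {b. (l, b) \<in> ?R `` E}"
      using ImageI[OF sym gE] by simp
  qed
  have "openin W {b. (l, b) \<in> ?R `` E}" if l: "l \<in> carrier G" for l
  proof -
    have "openin W {b \<in> D (inv (inv g \<otimes> l)). th (inv g \<otimes> l) b \<in> {a. (g, a) \<in> E}}"
      if g: "g \<in> carrier G" for g
      by (rule openin_preimage_on_openin[OF top_partial_action_continuous[OF tpa]
            top_partial_action_openin[OF tpa] E_slice]) (use g l in simp_all)
    then show ?thesis
      unfolding slice[OF l] by blast
  qed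
  moreover have "?R `` E \<subseteq> carrier G \<times> topspace W"
    by (auto simp: envel_rel_def)
  ultimately show ?thesis
    using openin_prod_discrete_topology_iff by blast
qed

lemma Hausdorff_enveloping_space_iff_closedin:
  assumes tpa: "top_partial_action G W D th"
  shows "Hausdorff_space (enveloping_space G W D th) \<longleftrightarrow>
    closedin (prod_topology (prod_topology (discrete_topology (carrier G)) W)
                            (prod_topology (discrete_topology (carrier G)) W))
      (envel_rel G W D th)"
proof -
  have "equiv (topspace (prod_topology (discrete_topology (carrier G)) W)) (envel_rel G W D th)"
    using equiv_envel_rel[OF tpa] by simp
  then show ?thesis
    unfolding enveloping_space_def
    using Hausdorff_quotient_if_closedin_equiv closedin_equiv_if_Hausdorff_quotient
      openin_envel_rel_Image[OF tpa] by blast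
qed

lemma closedin_envel_rel:
  assumes tpa: "top_partial_action G W D th" and "Hausdorff_space W"
    and closed: "\<And>g. g \<in> carrier G \<Longrightarrow> closedin W (D g)"
  shows "closedin (prod_topology (prod_topology (discrete_topology (carrier G)) W)
                                 (prod_topology (discrete_topology (carrier G)) W))
      (envel_rel G W D th)"
proof (rule closedin_prod_discrete_topology_square)
  show "envel_rel G W D th \<subseteq> topspace (prod_topology (prod_topology (discrete_topology (carrier G)) W)
                                 (prod_topology (discrete_topology (carrier G)) W))"
    by (auto simp: envel_rel_def)
next
  fix g h assume g: "g \<in> carrier G" and h: "h \<in> carrier G"
  let ?k = "inv h \<otimes> g"
  have k: "?k \<in> carrier G" and inv_k: "inv ?k = inv g \<otimes> h"
    using g h by (simp_all add: inv_mult_group)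
  have "{(a, b). ((g, a), (h, b)) \<in> envel_rel G W D th} = (\<lambda>a. (a, th ?k a)) ` D (inv ?k)"
    using g h top_partial_action_subset_topspace[OF tpa, of "inv ?k"]
      top_partial_action_in_topspace[OF tpa k]
    by (auto simp: envel_rel_def inv_k)
  moreover have "closedin (prod_topology W W) ((\<lambda>a. (a, th ?k a)) ` D (inv ?k))"
    using closed k assms(2) top_partial_action_continuous[OF tpa k]
    by (intro closedin_graph_on_closedin) auto
  ultimately show "closedin (prod_topology W W) {(a, b). ((g, a), (h, b)) \<in> envel_rel G W D th}"
    by simp
qed

text \<open>The domain is the projection of a closed subset of \<open>Y \<times> Y\<close>. Since \<open>W\<close> itself need not
  be compact (it will be \<open>C(X, Y)\<close>), the compact space \<open>Y\<close> is mapped into \<open>W\<close> by \<open>c\<close>.\<close>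
lemma closedin_domain_if_closedin_envel_rel:
  assumes tpa: "top_partial_action G W D th"
    and closed: "closedin (prod_topology (prod_topology (discrete_topology (carrier G)) W)
                                          (prod_topology (discrete_topology (carrier G)) W))
                   (envel_rel G W D th)"
    and "compact_space Y" and c: "continuous_map Y W c" and h: "h \<in> carrier G"
    and c_stable: "\<And>y. y \<in> topspace Y \<Longrightarrow> c y \<in> D h \<Longrightarrow> th (inv h) (c y) \<in> c ` topspace Y"
  shows "closedin Y {y \<in> topspace Y. c y \<in> D h}"
proof -
  let ?P = "prod_topology (discrete_topology (carrier G)) W"
  let ?f = "\<lambda>z. ((\<one>, c (fst z)), (h, c (snd z)))"
  let ?S = "{z \<in> topspace (prod_topology Y Y). ?f z \<in> envel_rel G W D th}"
  have "continuous_map (prod_topology Y Y) (prod_topology ?P ?P) ?f"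
    using h continuous_map_compose[OF continuous_map_fst c] continuous_map_compose[OF continuous_map_snd c]
    by (intro continuous_map_pairedI) (simp_all add: o_def)
  then have "closedin (prod_topology Y Y) ?S"
    using closed by (rule closedin_continuous_map_preimage)
  then have "closedin Y (fst ` ?S)"
    using closed_map_fst[OF assms(3), of Y] unfolding closed_map_def by blast
  moreover have "fst ` ?S = {y \<in> topspace Y. c y \<in> D h}"
  proof (intro subset_antisym subsetI)
    fix y assume "y \<in> fst ` ?S"
    then show "y \<in> {y \<in> topspace Y. c y \<in> D h}"
      using h by (auto simp: envel_rel_def)
  next
    fix y assume y: "y \<in> {y \<in> topspace Y. c y \<in> D h}"
    then obtain y' where y': "y' \<in> topspace Y" "th (inv h) (c y) = c y'"
      using c_stable by fastforce
    have "c y \<in> topspace W" "c y' \<in> topspace W"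
      using y y'(1) c continuous_map_image_subset_topspace by blast+
    then have "(y, y') \<in> ?S"
      using y y' h by (auto simp: envel_rel_def)
    then show "y \<in> fst ` ?S"
      by force
  qed
  ultimately show ?thesis
    by simp
qed

end

section \<open>The compact-open topology and the induced action\<close>

lemma cmaps_in_compact_open_subbasis:
  "cmaps X Y \<in> {{f \<in> cmaps X Y. f ` K \<subseteq> U} | K U. compactin X K \<and> openin Y U}"
  by (rule CollectI, rule exI[of _ "{}"], rule exI[of _ "topspace Y"]) auto

lemma topspace_compact_open: "topspace (compact_open X Y) = cmaps X Y"
  using cmaps_in_compact_open_subbasis
  unfolding compact_open_def topology_generated_by_topspace by blast

lemma openin_compact_open:
  assumes "compactin X K" "openin Y U"
  shows "openin (compact_open X Y) {f \<in> cmaps X Y. f ` K \<subseteq> U}"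
  unfolding compact_open_def by (rule topology_generated_by_Basis) (use assms in blast)

lemma continuous_map_into_compact_open:
  assumes "F ` topspace Z \<subseteq> cmaps X Y"
    and "\<And>K U. compactin X K \<Longrightarrow> openin Y U \<Longrightarrow> openin Z {z \<in> topspace Z. F z ` K \<subseteq> U}"
  shows "continuous_map Z (compact_open X Y) F"
  unfolding compact_open_def
proof (rule continuous_on_generated_topo)
  fix B assume "B \<in> {{f \<in> cmaps X Y. f ` K \<subseteq> U} | K U. compactin X K \<and> openin Y U}"
  then obtain K U where B: "B = {f \<in> cmaps X Y. f ` K \<subseteq> U}" "compactin X K" "openin Y U"
    by blast
  have "F -` B \<inter> topspace Z = {z \<in> topspace Z. F z ` K \<subseteq> U}"
    using assms(1) unfolding B(1) by auto
  then show "openin Z (F -` B \<inter> topspace Z)"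
    using assms(2)[OF B(2,3)] by simp
next
  show "F ` topspace Z \<subseteq> \<Union>{{f \<in> cmaps X Y. f ` K \<subseteq> U} | K U. compactin X K \<and> openin Y U}"
    using assms(1) cmaps_in_compact_open_subbasis by blast
qed

lemma cmaps_in_topspace: "f \<in> cmaps X Y \<Longrightarrow> x \<in> topspace X \<Longrightarrow> f x \<in> topspace Y"
  by (auto simp: cmaps_def)

lemma cmaps_extensional: "f \<in> cmaps X Y \<Longrightarrow> f \<in> extensional (topspace X)"
  by (auto simp: cmaps_def PiE_def)

lemma Hausdorff_space_compact_open:
  assumes "Hausdorff_space Y"
  shows "Hausdorff_space (compact_open X Y)"
  unfolding Hausdorff_space_def topspace_compact_open
proof (intro allI impI, elim conjE)
  fix f g assume f: "f \<in> cmaps X Y" and g: "g \<in> cmaps X Y" and "f \<noteq> g"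
  then obtain x where x: "x \<in> topspace X" "f x \<noteq> g x"
    using extensionalityI[OF cmaps_extensional cmaps_extensional] by metis
  then obtain U V where UV: "openin Y U" "openin Y V" "f x \<in> U" "g x \<in> V" "disjnt U V"
    using assms cmaps_in_topspace[OF f] cmaps_in_topspace[OF g] unfolding Hausdorff_space_def
    by metis
  have K: "compactin X {x}"
    using x by simp
  show "\<exists>U V. openin (compact_open X Y) U \<and> openin (compact_open X Y) V \<and> f \<in> U \<and> g \<in> V
      \<and> disjnt U V"
  proof (intro exI conjI)
    show "openin (compact_open X Y) {h \<in> cmaps X Y. h ` {x} \<subseteq> U}"
      by (rule openin_compact_open[OF K UV(1)])
    show "openin (compact_open X Y) {h \<in> cmaps X Y. h ` {x} \<subseteq> V}"
      by (rule openin_compact_open[OF K UV(2)])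
    show "disjnt {h \<in> cmaps X Y. h ` {x} \<subseteq> U} {h \<in> cmaps X Y. h ` {x} \<subseteq> V}"
      using UV(5) by (auto simp: disjnt_def)
  qed (use f g UV in auto)
qed

lemma const_in_cmaps:
  assumes "y \<in> topspace Y"
  shows "(\<lambda>x\<in>topspace X. y) \<in> cmaps X Y"
proof -
  have "continuous_map X Y (\<lambda>x. y)"
    using assms by simp
  then have "continuous_map X Y (\<lambda>x\<in>topspace X. y)"
    by (rule continuous_map_eq) simp
  then show ?thesis
    using assms by (auto simp: cmaps_def)
qed

lemma continuous_map_const_compact_open:
  "continuous_map Y (compact_open X Y) (\<lambda>y. \<lambda>x\<in>topspace X. y)"
proof (rule continuous_map_into_compact_open)
  show "(\<lambda>y. \<lambda>x\<in>topspace X. y) ` topspace Y \<subseteq> cmaps X Y"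
    using const_in_cmaps[of _ Y X] by (simp add: image_subset_iff)
  fix K U assume K: "compactin X K" and U: "openin Y U"
  have "{y \<in> topspace Y. (\<lambda>x\<in>topspace X. y) ` K \<subseteq> U} = (if K = {} then topspace Y else U)"
    using compactin_subset_topspace[OF K] openin_subset[OF U] by auto
  then show "openin Y {y \<in> topspace Y. (\<lambda>x\<in>topspace X. y) ` K \<subseteq> U}"
    using U by simp
qed

lemma openin_hat_dom:
  assumes "compact_space X" "openin Y (D g)"
  shows "openin (compact_open X Y) (hat_dom X Y D g)"
  unfolding hat_dom_def using openin_compact_open[of X "topspace X" Y "D g"] assms
  by (simp add: compact_space_def)

lemma closedin_hat_dom:
  assumes "closedin Y (D g)"
  shows "closedin (compact_open X Y) (hat_dom X Y D g)"
proof -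
  have "cmaps X Y - hat_dom X Y D g = (\<Union>x\<in>topspace X. {f \<in> cmaps X Y. f ` {x} \<subseteq> topspace Y - D g})"
    by (auto simp: hat_dom_def cmaps_in_topspace)
  moreover have "openin (compact_open X Y) {f \<in> cmaps X Y. f ` {x} \<subseteq> topspace Y - D g}"
    if "x \<in> topspace X" for x
    using that assms by (intro openin_compact_open) (auto simp: closedin_def)
  ultimately show ?thesis
    unfolding closedin_def topspace_compact_open by (auto simp: hat_dom_def)
qed

lemma const_in_hat_dom_iff:
  assumes "topspace X \<noteq> {}" "y \<in> topspace Y"
  shows "(\<lambda>x\<in>topspace X. y) \<in> hat_dom X Y D g \<longleftrightarrow> y \<in> D g"
proof -
  have "(\<lambda>x\<in>topspace X. y) ` topspace X = {y}"
    using assms(1) by (simp add: image_constant_conv)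
  then show ?thesis
    using const_in_cmaps[OF assms(2), of X] by (simp add: hat_dom_def)
qed

lemma topspace_subtopology_hat_dom:
  "topspace (subtopology (compact_open X Y) (hat_dom X Y D g)) = hat_dom X Y D g"
  by (auto simp: topspace_compact_open hat_dom_def)

context group
begin

lemma hat_act_in_hat_dom:
  assumes tpa: "top_partial_action G Y D th" and g: "g \<in> carrier G"
    and f: "f \<in> hat_dom X Y D (inv g)"
  shows "hat_act X th g f \<in> hat_dom X Y D g"
proof -
  have "continuous_map X Y f" and f_img: "f ` topspace X \<subseteq> D (inv g)"
    using f by (auto simp: hat_dom_def cmaps_def)
  then have "continuous_map X (subtopology Y (D (inv g))) f"
    by (simp add: continuous_map_in_subtopology image_subset_iff_funcset)
  then have "continuous_map X Y (th g \<circ> f)"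
    using continuous_map_compose top_partial_action_continuous[OF tpa g] by blast
  then have "continuous_map X Y (hat_act X th g f)"
    by (rule continuous_map_eq) (simp add: hat_act_def)
  moreover have "th g (f x) \<in> D g" if "x \<in> topspace X" for x
    using top_partial_action_in_domain[OF tpa g] f_img that by blast
  ultimately show ?thesis
    using top_partial_action_subset_topspace[OF tpa g]
    by (auto simp: hat_dom_def cmaps_def hat_act_def)
qed

lemma hat_act_inv_cancel:
  assumes tpa: "top_partial_action G Y D th" and g: "g \<in> carrier G"
    and f: "f \<in> hat_dom X Y D (inv g)"
  shows "hat_act X th (inv g) (hat_act X th g f) = f"
proof (rule extensionalityI)
  show "f \<in> extensional (topspace X)"
    using f cmaps_extensional by (auto simp: hat_dom_def)
  fix x assume "x \<in> topspace X"
  then show "hat_act X th (inv g) (hat_act X th g f) x = f x"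
    using top_partial_action_inv_cancel[OF tpa g] f by (auto simp: hat_act_def hat_dom_def)
qed (simp add: hat_act_def)

lemma hat_act_mult:
  assumes tpa: "top_partial_action G Y D th" and g: "g \<in> carrier G" and h: "h \<in> carrier G"
    and f: "f \<in> hat_dom X Y D (inv h)" and hf: "hat_act X th h f \<in> hat_dom X Y D (inv g)"
  shows "f \<in> hat_dom X Y D (inv (g \<otimes> h))
    \<and> hat_act X th (g \<otimes> h) f = hat_act X th g (hat_act X th h f)"
proof -
  have "f x \<in> D (inv (g \<otimes> h)) \<and> th (g \<otimes> h) (f x) = th g (th h (f x))"
    if "x \<in> topspace X" for x
    using top_partial_action_mult[OF tpa g h] f hf that
    by (auto simp: hat_dom_def hat_act_def)
  then show ?thesis
    using f by (auto simp: hat_dom_def hat_act_def)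
qed

lemma continuous_map_hat_act:
  assumes tpa: "top_partial_action G Y D th" and g: "g \<in> carrier G"
  shows "continuous_map (subtopology (compact_open X Y) (hat_dom X Y D (inv g))) (compact_open X Y)
    (hat_act X th g)"
proof (rule continuous_map_into_compact_open)
  show "hat_act X th g ` topspace (subtopology (compact_open X Y) (hat_dom X Y D (inv g)))
      \<subseteq> cmaps X Y"
    using hat_act_in_hat_dom[OF tpa g] by (auto simp: topspace_subtopology_hat_dom hat_dom_def)
  fix K V assume K: "compactin X K" and V: "openin Y V"
  let ?Hd = "hat_dom X Y D (inv g)"
  have "{f \<in> topspace (subtopology (compact_open X Y) ?Hd). hat_act X th g f ` K \<subseteq> V}
      = ?Hd \<inter> {f \<in> cmaps X Y. f ` K \<subseteq> {y \<in> D (inv g). th g y \<in> V}}"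
    using compactin_subset_topspace[OF K]
    by (auto simp: topspace_subtopology_hat_dom topspace_compact_open hat_dom_def hat_act_def)
  moreover have "openin Y {y \<in> D (inv g). th g y \<in> V}"
    using g by (intro openin_preimage_on_openin[OF top_partial_action_continuous[OF tpa g]
        top_partial_action_openin[OF tpa] V]) auto
  ultimately show "openin (subtopology (compact_open X Y) ?Hd)
      {f \<in> topspace (subtopology (compact_open X Y) ?Hd). hat_act X th g f ` K \<subseteq> V}"
    using openin_subtopology_Int2[OF openin_compact_open[OF K]] by simp
qed

lemma top_partial_action_hat:
  assumes tpa: "top_partial_action G Y D th" and "compact_space X"
  shows "top_partial_action G (compact_open X Y) (hat_dom X Y D) (hat_act X th)"
  unfolding top_partial_action_def
proof (intro conjI ballI impI)
  fix g assume g: "g \<in> carrier G"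
  show "openin (compact_open X Y) (hat_dom X Y D g)"
    using assms(2) top_partial_action_openin[OF tpa g] by (rule openin_hat_dom)
  let ?C = "compact_open X Y"
  have "homeomorphic_maps (subtopology ?C (hat_dom X Y D (inv g))) (subtopology ?C (hat_dom X Y D g))
      (hat_act X th g) (hat_act X th (inv g))"
    unfolding homeomorphic_maps_def
  proof (intro conjI ballI)
    show "continuous_map (subtopology ?C (hat_dom X Y D (inv g))) (subtopology ?C (hat_dom X Y D g))
        (hat_act X th g)"
      unfolding continuous_map_in_subtopology topspace_subtopology_hat_dom
      using continuous_map_hat_act[OF tpa g] hat_act_in_hat_dom[OF tpa g] by blast
    show "continuous_map (subtopology ?C (hat_dom X Y D g)) (subtopology ?C (hat_dom X Y D (inv g)))
        (hat_act X th (inv g))"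
      unfolding continuous_map_in_subtopology topspace_subtopology_hat_dom
      using continuous_map_hat_act[OF tpa inv_closed[OF g]] hat_act_in_hat_dom[OF tpa inv_closed[OF g]]
      unfolding inv_inv[OF g] by blast
  next
    fix f assume "f \<in> topspace (subtopology ?C (hat_dom X Y D (inv g)))"
    then show "hat_act X th (inv g) (hat_act X th g f) = f"
      unfolding topspace_subtopology_hat_dom by (rule hat_act_inv_cancel[OF tpa g])
  next
    fix f assume "f \<in> topspace (subtopology ?C (hat_dom X Y D g))"
    then show "hat_act X th g (hat_act X th (inv g) f) = f"
      using hat_act_inv_cancel[OF tpa inv_closed[OF g]]
      unfolding topspace_subtopology_hat_dom inv_inv[OF g] by blast
  qed
  then show "homeomorphic_map (subtopology (compact_open X Y) (hat_dom X Y D (inv g)))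
      (subtopology (compact_open X Y) (hat_dom X Y D g)) (hat_act X th g)"
    using homeomorphic_map_maps by blast
  fix f assume "f \<in> hat_dom X Y D (inv g)"
  then show "hat_act X th (inv g) (hat_act X th g f) = f"
    by (rule hat_act_inv_cancel[OF tpa g])
next
  show "hat_dom X Y D \<one> = topspace (compact_open X Y)"
    using cmaps_in_topspace[of _ X Y]
    unfolding hat_dom_def topspace_compact_open top_partial_action_one(1)[OF tpa] by blast
next
  fix f assume f: "f \<in> topspace (compact_open X Y)"
  show "hat_act X th \<one> f = f"
  proof (rule extensionalityI)
    show "f \<in> extensional (topspace X)"
      using f cmaps_extensional by (auto simp: topspace_compact_open)
    fix x assume "x \<in> topspace X"
    then show "hat_act X th \<one> f x = f x"
      using top_partial_action_one(2)[OF tpa] f cmaps_in_topspace[of f X Y x]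
      by (auto simp: hat_act_def topspace_compact_open)
  qed (simp add: hat_act_def)
next
  fix g h f assume "g \<in> carrier G" "h \<in> carrier G" "f \<in> hat_dom X Y D (inv h)"
    "hat_act X th h f \<in> hat_dom X Y D (inv g)"
  from hat_act_mult[OF tpa this] show "f \<in> hat_dom X Y D (inv (g \<otimes> h))"
    by blast
next
  fix g h f assume "g \<in> carrier G" "h \<in> carrier G" "f \<in> hat_dom X Y D (inv h)"
    "hat_act X th h f \<in> hat_dom X Y D (inv g)"
  from hat_act_mult[OF tpa this]
  show "hat_act X th (g \<otimes> h) f = hat_act X th g (hat_act X th h f)"
    by blast
qed

lemma Hausdorff_enveloping_space_iff_closedin_domains:
  assumes tpa: "top_partial_action G Y D th" and "compact_space Y" "Hausdorff_space Y"
  shows "Hausdorff_space (enveloping_space G Y D th) \<longleftrightarrow> (\<forall>g\<in>carrier G. closedin Y (D g))"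
proof -
  have "Hausdorff_space (enveloping_space G Y D th) \<longleftrightarrow>
      closedin (prod_topology (prod_topology (discrete_topology (carrier G)) Y)
                              (prod_topology (discrete_topology (carrier G)) Y))
        (envel_rel G Y D th)"
    by (rule Hausdorff_enveloping_space_iff_closedin[OF tpa])
  also have "\<dots> \<longleftrightarrow> (\<forall>g\<in>carrier G. closedin Y (D g))"
  proof
    assume closed: "closedin (prod_topology (prod_topology (discrete_topology (carrier G)) Y)
                                            (prod_topology (discrete_topology (carrier G)) Y))
                      (envel_rel G Y D th)"
    show "\<forall>g\<in>carrier G. closedin Y (D g)"
    proof
      fix g assume g: "g \<in> carrier G"
      have "closedin Y {y \<in> topspace Y. id y \<in> D g}"
        using top_partial_action_in_topspace[OF tpa inv_closed[OF g]] g
        by (intro closedin_domain_if_closedin_envel_rel[OF tpa closed assms(2) continuous_map_id g])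
          auto
      moreover have "{y \<in> topspace Y. id y \<in> D g} = D g"
        using top_partial_action_subset_topspace[OF tpa g] by auto
      ultimately show "closedin Y (D g)"
        by simp
    qed
  next
    assume "\<forall>g\<in>carrier G. closedin Y (D g)"
    then show "closedin (prod_topology (prod_topology (discrete_topology (carrier G)) Y)
                                       (prod_topology (discrete_topology (carrier G)) Y))
                 (envel_rel G Y D th)"
      using closedin_envel_rel[OF tpa assms(3)] by blast
  qed
  finally show ?thesis .
qed

lemma Hausdorff_enveloping_space_hat_iff_closedin_domains:
  assumes tpa: "top_partial_action G Y D th" and "compact_space Y" "Hausdorff_space Y"
    and "compact_space X" "topspace X \<noteq> {}"
  shows "Hausdorff_space (enveloping_space G (compact_open X Y) (hat_dom X Y D) (hat_act X th))
    \<longleftrightarrow> (\<forall>g\<in>carrier G. closedin Y (D g))"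
proof -
  let ?C = "compact_open X Y"
  let ?const = "\<lambda>y. \<lambda>x\<in>topspace X. y"
  have tpa_hat: "top_partial_action G ?C (hat_dom X Y D) (hat_act X th)"
    using top_partial_action_hat[OF tpa assms(4)] .
  have "Hausdorff_space (enveloping_space G ?C (hat_dom X Y D) (hat_act X th)) \<longleftrightarrow>
      closedin (prod_topology (prod_topology (discrete_topology (carrier G)) ?C)
                              (prod_topology (discrete_topology (carrier G)) ?C))
        (envel_rel G ?C (hat_dom X Y D) (hat_act X th))"
    by (rule Hausdorff_enveloping_space_iff_closedin[OF tpa_hat])
  also have "\<dots> \<longleftrightarrow> (\<forall>g\<in>carrier G. closedin Y (D g))"
  proof
    assume closed: "closedin (prod_topology (prod_topology (discrete_topology (carrier G)) ?C)
                                            (prod_topology (discrete_topology (carrier G)) ?C))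
                      (envel_rel G ?C (hat_dom X Y D) (hat_act X th))"
    show "\<forall>g\<in>carrier G. closedin Y (D g)"
    proof
      fix g assume g: "g \<in> carrier G"
      have "closedin Y {y \<in> topspace Y. ?const y \<in> hat_dom X Y D g}"
      proof (rule closedin_domain_if_closedin_envel_rel[OF tpa_hat closed assms(2)
            continuous_map_const_compact_open g])
        fix y assume y: "y \<in> topspace Y" "?const y \<in> hat_dom X Y D g"
        have "th (inv g) y \<in> topspace Y"
          using const_in_hat_dom_iff[OF assms(5) y(1), THEN iffD1, OF y(2)] g
            top_partial_action_in_topspace[OF tpa inv_closed[OF g]] by simp
        moreover have "hat_act X th (inv g) (?const y) = ?const (th (inv g) y)"
          unfolding hat_act_def by (rule restrict_ext) simp
        ultimately show "hat_act X th (inv g) (?const y) \<in> ?const ` topspace Y"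
          by (metis imageI)
      qed
      moreover have "{y \<in> topspace Y. ?const y \<in> hat_dom X Y D g} = D g"
        using const_in_hat_dom_iff[OF assms(5), of _ Y D g] top_partial_action_subset_topspace[OF tpa g]
        by blast
      ultimately show "closedin Y (D g)"
        by simp
    qed
  next
    assume "\<forall>g\<in>carrier G. closedin Y (D g)"
    then have "closedin ?C (hat_dom X Y D g)" if "g \<in> carrier G" for g
      using that by (simp add: closedin_hat_dom)
    then show "closedin (prod_topology (prod_topology (discrete_topology (carrier G)) ?C)
                                       (prod_topology (discrete_topology (carrier G)) ?C))
                 (envel_rel G ?C (hat_dom X Y D) (hat_act X th))"
      by (rule closedin_envel_rel[OF tpa_hat Hausdorff_space_compact_open[OF assms(3)]])
  qed
  finally show ?thesis .
qed

end

theorem corollary3p6: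
  fixes G :: "('g, 'm) monoid_scheme"
    and Y :: "'b topology" and D :: "'g \<Rightarrow> 'b set" and th :: "'g \<Rightarrow> 'b \<Rightarrow> 'b"
    and X :: "'a topology"
  assumes "group G" and "countable (carrier G)"
    and "top_partial_action G Y D th"
    and "compact_space Y" and "Hausdorff_space Y"
    and "compact_space X" and "Hausdorff_space X" and "topspace X \<noteq> {}"
  shows "((\<forall>g\<in>carrier G. closedin Y (D g) \<and> openin Y (D g))
            \<longleftrightarrow> Hausdorff_space (enveloping_space G Y D th))
       \<and> (Hausdorff_space (enveloping_space G Y D th)
            \<longleftrightarrow> Hausdorff_space (enveloping_space G (compact_open X Y)
                                   (hat_dom X Y D) (hat_act X th)))"
proof -
  interpret group G by (rule assms(1))
  have "(\<forall>g\<in>carrier G. closedin Y (D g) \<and> openin Y (D g)) \<longleftrightarrow> (\<forall>g\<in>carrier G. closedin Y (D g))"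
    using top_partial_action_openin[OF assms(3)] by blast
  moreover note Hausdorff_enveloping_space_iff_closedin_domains[OF assms(3-5)]
  moreover note Hausdorff_enveloping_space_hat_iff_closedin_domains[OF assms(3-6,8)]
  ultimately show ?thesis
    by simp
qed

end
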